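(* Fix $a>0$ and let $\Phi:\mathbb{R}\to\mathbb{R}$ be the static kink on the wormhole of throat radius $a$, i.e. the odd smooth solution of \[ \Phi''(r)+\frac{2r}{r^2+a^2}\Phi'(r) = -2\Phi(r)\bigl(1-\Phi(r)^2\bigr), \qquad r\in\mathbb{R}, \] satisfying $\Phi(r)\to 1$ as $r\to+\infty$ and $\Phi(r)\to -1$ as $r\to-\infty$. Then $\Phi$ is linearly stable: the Schrödinger operator \[ L=-\frac{d^2}{dr^2}+V(r),\qquad V(r)=\frac{a^2}{(r^2+a^2)^2}-2\bigl(1-3\Phi(r)^2\bigr), \] acting on smooth square-integrable functions on $\mathbb{R}$, has no negative eigenvalues; that is, if $v\neq 0$ is smooth and square integrable on $\mathbb{R}$ with $Lv=\omega^2 v$ for some real number $\omega^2$, then $\omega^2\ge 0$.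
   Context: This arises from the field equation $\phi_{tt}=\phi_{rr}+\frac{2r}{r^2+a^2}\phi_r+2\phi(1-\phi^2)$ for spherically symmetric $\phi^4$ fields on the wormhole metric $g=-dt^2+dr^2+(r^2+a^2)(d\vartheta^2+\sin^2\vartheta\,d\varphi^2)$; linearising $\phi=\Phi+e^{i\omega t}(r^2+a^2)^{-1/2}v(r)$ about the static kink $\Phi$ gives the eigenvalue problem $Lv=\omega^2v$. Linear stability of $\Phi$ means that $L$ has no negative eigenvalues. *)

theory Defs
  imports "HOL-Analysis.Analysis"
begin

definition smooth :: "(real \<Rightarrow> real) \<Rightarrow> bool" where
  "smooth f \<longleftrightarrow> (\<forall>n x. ((deriv ^^ n) f) differentiable (at x))"

definition square_integrable :: "(real \<Rightarrow> real) \<Rightarrow> bool" where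
  "square_integrable v \<longleftrightarrow> v \<in> borel_measurable lborel \<and> integrable lborel (\<lambda>x. (v x)^2)"

definition kink_potential :: "real \<Rightarrow> (real \<Rightarrow> real) \<Rightarrow> real \<Rightarrow> real" where
  "kink_potential a \<Phi> r = a^2 / (r^2 + a^2)^2 - 2 * (1 - 3 * (\<Phi> r)^2)"

end

theory Submission
  imports Defs
begin

(* The function psi = (r^2 + a^2) Phi' is a positive supersolution of L: the kink equation gives
   L psi = a^2 Phi' / (r^2 + a^2) + 4 r Phi (1 - Phi^2) >= 0.  Positivity of Phi' comes from the
   energy Phi'^2/2 + Phi^2 - Phi^4/2, which decreases on r >= 0 towards 1/2 and thus forces
   Phi'^2 >= (1 - Phi^2)^2; a zero of Phi' would then be an equilibrium point +-1 of the ODE,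
   excluded by backward uniqueness and Phi 0 = 0.
   If Lv = omega2 v with omega2 < 0 and v in L^2, then v v'' >= 0 near +-infinity, so v^2 is convex
   there and v^2, v v' tend to 0.  With g = psi'/psi the quantity 2 v v' - 2 g v^2 has derivative
   2 (v' - g v)^2 + 2 (V - psi''/psi - omega2) v^2 >= -2 omega2 v^2, so it is nondecreasing,
   vanishes at both ends and is strictly increasing where v is nonzero: contradiction. *)

lemma integrable_nonneg_not_bounded_below_on_tail:
  fixes g :: "real \<Rightarrow> real"
  assumes int: "integrable lborel g" and nonneg: "\<And>x. g x \<ge> 0" and "c > 0"
  obtains x where "x \<ge> T" "g x < c"
proof (rule ccontr)
  assume "\<not> thesis"
  with that have ge: "c \<le> g x" if "T \<le> x" for x
    using \<open>T \<le> x\<close> by (meson not_less)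
  define L where "L = integral\<^sup>L lborel g / c + 1"
  have "integral\<^sup>L lborel g \<ge> 0"
    by (simp add: nonneg)
  with \<open>c > 0\<close> have "L > 0"
    by (simp add: L_def add_nonneg_pos)
  have "c * L = integral\<^sup>L lborel (\<lambda>x. c * indicator {T..T+L} x)"
    using \<open>L > 0\<close> by simp
  also have "\<dots> \<le> integral\<^sup>L lborel g"
    using ge nonneg \<open>c > 0\<close>
    by (intro integral_mono int integrable_mult_right integrable_real_indicator)
       (auto simp: emeasure_lborel_Icc_eq indicator_def)
  finally have "c * L \<le> integral\<^sup>L lborel g" .
  moreover have "c * L = integral\<^sup>L lborel g + c"
    using \<open>c > 0\<close> by (simp add: L_def field_simps)
  ultimately show False
    using \<open>c > 0\<close> by simp
qed

lemma secant_bounds_of_mono_deriv: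
  fixes q q' :: "real \<Rightarrow> real"
  assumes deriv: "\<And>x. (q has_real_derivative q' x) (at x)"
    and mono: "mono_on {T..} q'"
    and "T \<le> x" "x \<le> y"
  shows "q' x * (y - x) \<le> q y - q x" "q y - q x \<le> q' y * (y - x)"
proof -
  have "\<exists>z. x \<le> z \<and> z \<le> y \<and> q y - q x = (y - x) * q' z"
  proof (cases "x = y")
    case False
    with assms MVT2[of x y q q'] show ?thesis
      by (fastforce simp: order.order_iff_strict)
  qed auto
  then obtain z where "x \<le> z" "z \<le> y" "q y - q x = (y - x) * q' z"
    by blast
  with assms show "q' x * (y - x) \<le> q y - q x" "q y - q x \<le> q' y * (y - x)"
    by (auto simp: mult.commute intro!: mult_right_mono mono_onD[OF mono])
qed

lemma convex_integrable_deriv_nonpos: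
  fixes q q' :: "real \<Rightarrow> real"
  assumes deriv: "\<And>x. (q has_real_derivative q' x) (at x)"
    and mono: "mono_on {T..} q'"
    and nonneg: "\<And>x. q x \<ge> 0" and int: "integrable lborel q"
    and "s \<ge> T"
  shows "q' s \<le> 0"
proof (rule ccontr)
  assume "\<not> q' s \<le> 0"
  then have "q' s > 0" by simp
  obtain y where y: "y \<ge> s + 1 / q' s" "q y < 1"
    using integrable_nonneg_not_bounded_below_on_tail[OF int nonneg zero_less_one] by blast
  have "s \<le> y"
    using y \<open>q' s > 0\<close> by (smt (verit) divide_pos_pos)
  have "1 \<le> q' s * (y - s)"
    using y \<open>q' s > 0\<close> by (simp add: field_simps)
  also have "\<dots> \<le> q y - q s"
    using secant_bounds_of_mono_deriv(1)[OF deriv mono \<open>s \<ge> T\<close> \<open>s \<le> y\<close>] .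
  finally show False
    using y nonneg[of s] by simp
qed

lemma convex_integrable_tendsto_zero:
  fixes q q' :: "real \<Rightarrow> real"
  assumes deriv: "\<And>x. (q has_real_derivative q' x) (at x)"
    and mono: "mono_on {T..} q'"
    and nonneg: "\<And>x. q x \<ge> 0" and int: "integrable lborel q"
  shows "(q \<longlongrightarrow> 0) at_top" "(q' \<longlongrightarrow> 0) at_top"
proof -
  note secant = secant_bounds_of_mono_deriv[OF deriv mono]
  note deriv_nonpos = convex_integrable_deriv_nonpos[OF deriv mono nonneg int]
  have antimono: "q y \<le> q x" if "T \<le> x" "x \<le> y" for x y
    using secant(2)[OF that] deriv_nonpos[of y] that
    by (smt (verit) mult_nonpos_nonneg)
  show q_lim: "(q \<longlongrightarrow> 0) at_top"
  proof (rule order_tendstoI)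
    fix e :: real assume "e > 0"
    then obtain x0 where "x0 \<ge> T" "q x0 < e"
      using integrable_nonneg_not_bounded_below_on_tail[OF int nonneg] by blast
    then show "\<forall>\<^sub>F x in at_top. q x < e"
      unfolding eventually_at_top_linorder by (auto intro: le_less_trans antimono)
  qed (auto intro!: always_eventually less_le_trans[OF _ nonneg])
  have "((\<lambda>x. q (-1 + x)) \<longlongrightarrow> 0) at_top"
    using q_lim by (rule filterlim_compose)
      (rule filterlim_tendsto_add_at_top[OF tendsto_const filterlim_ident])
  with q_lim have "((\<lambda>x. q x - q (x - 1)) \<longlongrightarrow> 0) at_top"
    using tendsto_diff by fastforce
  then show "(q' \<longlongrightarrow> 0) at_top"
  proof (rule real_tendsto_sandwich[rotated 2])
    show "\<forall>\<^sub>F x in at_top. q x - q (x - 1) \<le> q' x"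
      using secant(2)[of "x - 1" x for x]
      unfolding eventually_at_top_linorder by (intro exI[of _ "T + 1"]) auto
    show "\<forall>\<^sub>F x in at_top. q' x \<le> 0"
      using deriv_nonpos unfolding eventually_at_top_linorder by blast
  qed simp
qed

lemma square_integrable_tail_decay_at_top:
  fixes v v' v'' :: "real \<Rightarrow> real"
  assumes v_deriv: "\<And>x. (v has_real_derivative v' x) (at x)"
    and v'_deriv: "\<And>x. (v' has_real_derivative v'' x) (at x)"
    and convex: "eventually (\<lambda>x. v x * v'' x \<ge> 0) at_top"
    and int: "integrable lborel (\<lambda>x. (v x)^2)"
  shows "((\<lambda>x. v x * v' x) \<longlongrightarrow> 0) at_top" "((\<lambda>x. (v x)^2) \<longlongrightarrow> 0) at_top"
proof -
  obtain T where T: "\<And>x. x \<ge> T \<Longrightarrow> v x * v'' x \<ge> 0"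
    using convex by (auto simp: eventually_at_top_linorder)
  have sq_deriv: "((\<lambda>x. (v x)^2) has_real_derivative 2 * (v x * v' x)) (at x)" for x
    using DERIV_power[OF v_deriv[of x], of 2] by (simp add: algebra_simps)
  have prod_deriv: "((\<lambda>x. 2 * (v x * v' x)) has_real_derivative 2 * ((v' x)^2 + v x * v'' x)) (at x)"
    for x
    using DERIV_cmult[OF DERIV_mult[OF v_deriv v'_deriv], of 2 x]
    by (simp add: algebra_simps power2_eq_square)
  have prod_mono: "mono_on {T..} (\<lambda>x. 2 * (v x * v' x))"
  proof (rule mono_onI)
    fix x y assume "x \<in> {T..}" "y \<in> {T..}" "x \<le> y"
    show "2 * (v x * v' x) \<le> 2 * (v y * v' y)"
    proof (rule DERIV_nonneg_imp_nondecreasing[OF \<open>x \<le> y\<close>])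
      fix t assume "x \<le> t" "t \<le> y"
      with \<open>x \<in> {T..}\<close> T[of t] have "0 \<le> 2 * ((v' t)^2 + v t * v'' t)"
        by simp
      with prod_deriv[of t]
      show "\<exists>d. ((\<lambda>x. 2 * (v x * v' x)) has_real_derivative d) (at t) \<and> 0 \<le> d"
        by blast
    qed
  qed
  note decay = convex_integrable_tendsto_zero[OF sq_deriv prod_mono zero_le_power2 int]
  show "((\<lambda>x. (v x)^2) \<longlongrightarrow> 0) at_top"
    by (fact decay(1))
  show "((\<lambda>x. v x * v' x) \<longlongrightarrow> 0) at_top"
    using tendsto_mult_left[OF decay(2), of "1/2"] by simp
qed

lemma square_integrable_tail_decay_at_bot:
  fixes v v' v'' :: "real \<Rightarrow> real"
  assumes v_deriv: "\<And>x. (v has_real_derivative v' x) (at x)"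
    and v'_deriv: "\<And>x. (v' has_real_derivative v'' x) (at x)"
    and convex: "eventually (\<lambda>x. v x * v'' x \<ge> 0) at_bot"
    and int: "integrable lborel (\<lambda>x. (v x)^2)"
  shows "((\<lambda>x. v x * v' x) \<longlongrightarrow> 0) at_bot" "((\<lambda>x. (v x)^2) \<longlongrightarrow> 0) at_bot"
proof -
  have "((\<lambda>x. v (- x)) has_real_derivative - v' (- x)) (at x)" for x
    using DERIV_mirror[of v "v' (- x)" x] v_deriv[of "- x"] by simp
  moreover have "((\<lambda>x. - v' (- x)) has_real_derivative v'' (- x)) (at x)" for x
    using DERIV_minus[OF iffD1[OF DERIV_mirror v'_deriv[of "- x"]]] by simp
  moreover have "eventually (\<lambda>x. v (- x) * v'' (- x) \<ge> 0) at_top"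
    using convex by (simp add: at_bot_mirror eventually_filtermap)
  moreover have "integrable lborel (\<lambda>x. (v (- x))^2)"
    using lborel_integrable_real_affine[OF int, of "-1" 0] by simp
  ultimately have "((\<lambda>x. v (- x) * - v' (- x)) \<longlongrightarrow> 0) at_top"
    and sq: "((\<lambda>x. (v (- x))^2) \<longlongrightarrow> 0) at_top"
    by (rule square_integrable_tail_decay_at_top)+
  from tendsto_minus[OF this(1)] show "((\<lambda>x. v x * v' x) \<longlongrightarrow> 0) at_bot"
    unfolding filterlim_at_bot_mirror by simp
  from sq show "((\<lambda>x. (v x)^2) \<longlongrightarrow> 0) at_bot"
    unfolding filterlim_at_bot_mirror by simp
qed

lemma mono_tendsto_zero_at_top_at_bot:
  fixes F :: "real \<Rightarrow> real"
  assumes "mono F" "(F \<longlongrightarrow> 0) at_top" "(F \<longlongrightarrow> 0) at_bot"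
  shows "F x = 0"
proof -
  have "eventually (\<lambda>y. F x \<le> F y) at_top" "eventually (\<lambda>y. F y \<le> F x) at_bot"
    unfolding eventually_at_top_linorder eventually_at_bot_linorder
    using monoD[OF \<open>mono F\<close>] by blast+
  with assms(2,3) have "F x \<le> 0" "0 \<le> F x"
    by (auto intro: tendsto_lowerbound tendsto_upperbound)
  then show ?thesis by simp
qed

lemma gronwall_exp_weighted_le:
  fixes z z' :: "real \<Rightarrow> real"
  assumes "c \<le> d"
    and z_deriv: "\<And>y. (z has_real_derivative z' y) (at y)"
    and z'_lower: "\<And>y. c \<le> y \<Longrightarrow> y \<le> d \<Longrightarrow> - K * z y \<le> z' y"
  shows "exp (K * c) * z c \<le> exp (K * d) * z d"
proof (rule DERIV_nonneg_imp_nondecreasing[OF \<open>c \<le> d\<close>])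
  fix y assume "c \<le> y" "y \<le> d"
  then have "0 \<le> exp (K * y) * (K * z y + z' y)"
    using z'_lower[of y] by simp
  moreover have "((\<lambda>y. exp (K * y) * z y) has_real_derivative exp (K * y) * (K * z y + z' y)) (at y)"
    by (rule derivative_eq_intros z_deriv refl | simp add: algebra_simps)+
  ultimately show "\<exists>D. ((\<lambda>y. exp (K * y) * z y) has_real_derivative D) (at y) \<and> 0 \<le> D"
    by blast
qed

text \<open>Gronwall for the energy \<open>z = w\<^sup>2 + w'\<^sup>2\<close>: as \<open>\<alpha>\<close> and \<open>\<beta>\<close> are bounded on \<open>[c, d]\<close>,
  \<open>z' \<ge> -K z\<close> there, so \<open>z d = 0\<close> forces \<open>z c = 0\<close>.\<close>
lemma linear_second_order_ode_backward_unique: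
  fixes w w' \<alpha> \<beta> :: "real \<Rightarrow> real"
  assumes "c \<le> d"
    and w_deriv: "\<And>y. (w has_real_derivative w' y) (at y)"
    and w'_deriv: "\<And>y. (w' has_real_derivative \<alpha> y * w y + \<beta> y * w' y) (at y)"
    and "continuous_on {c..d} \<alpha>" "continuous_on {c..d} \<beta>"
    and "w d = 0" "w' d = 0"
  shows "w c = 0"
proof -
  obtain A where A: "\<And>y. y \<in> {c..d} \<Longrightarrow> \<bar>\<alpha> y\<bar> \<le> A"
    using continuous_on_compact_bound[OF compact_Icc \<open>continuous_on {c..d} \<alpha>\<close>] by auto
  obtain B where B: "\<And>y. y \<in> {c..d} \<Longrightarrow> \<bar>\<beta> y\<bar> \<le> B"
    using continuous_on_compact_bound[OF compact_Icc \<open>continuous_on {c..d} \<beta>\<close>] by auto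
  define z where "z y = (w y)^2 + (w' y)^2" for y
  define z' where "z' y = 2 * (w y * w' y) + \<alpha> y * (2 * (w y * w' y)) + 2 * \<beta> y * (w' y)^2" for y
  have z_deriv: "(z has_real_derivative z' y) (at y)" for y
  proof -
    have "(z has_real_derivative 2 * w y * w' y + 2 * w' y * (\<alpha> y * w y + \<beta> y * w' y)) (at y)"
      unfolding z_def[abs_def]
      by (rule derivative_eq_intros w_deriv w'_deriv refl | simp)+
    then show ?thesis
      by (simp add: z'_def algebra_simps power2_eq_square)
  qed
  have z'_lower: "- (1 + A + 2 * B) * z y \<le> z' y" if "c \<le> y" "y \<le> d" for y
  proof -
    have cross: "\<bar>2 * (w y * w' y)\<bar> \<le> z y"
    proof -
      have "0 \<le> (\<bar>w y\<bar> - \<bar>w' y\<bar>)^2" by simp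
      then show ?thesis
        by (simp add: z_def abs_mult power2_diff)
    qed
    have "\<bar>\<alpha> y * (2 * (w y * w' y))\<bar> \<le> A * z y"
      unfolding abs_mult using A[of y] that cross by (intro mult_mono) auto
    moreover have "\<bar>2 * \<beta> y * (w' y)^2\<bar> \<le> 2 * B * z y"
      unfolding abs_mult using B[of y] that by (intro mult_mono) (auto simp: z_def)
    ultimately show ?thesis
      using cross by (simp add: z'_def algebra_simps)
  qed
  have "exp ((1 + A + 2 * B) * c) * z c \<le> 0"
    using gronwall_exp_weighted_le[OF \<open>c \<le> d\<close> z_deriv z'_lower] \<open>w d = 0\<close> \<open>w' d = 0\<close>
    by (simp add: z_def)
  then show ?thesis
    unfolding z_def mult_le_0_iff by (smt (verit) exp_gt_zero zero_le_power2 zero_eq_power2)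
qed

lemma log_deriv_has_real_derivative:
  fixes f f' f'' :: "real \<Rightarrow> real"
  assumes "f x \<noteq> 0" "(f has_real_derivative f' x) (at x)" "(f' has_real_derivative f'' x) (at x)"
  shows "((\<lambda>x. f' x / f x) has_real_derivative f'' x / f x - (f' x / f x)^2) (at x)"
  using DERIV_divide[OF assms(3,2,1)] assms(1)
  by (simp add: field_simps power2_eq_square)

lemma ground_state_functional_has_derivative:
  fixes f f' f'' V v v' v'' :: "real \<Rightarrow> real"
  assumes f_pos: "\<And>x. f x > 0"
    and f_deriv: "\<And>x. (f has_real_derivative f' x) (at x)"
    and f'_deriv: "\<And>x. (f' has_real_derivative f'' x) (at x)"
    and v_deriv: "\<And>x. (v has_real_derivative v' x) (at x)"
    and v'_deriv: "\<And>x. (v' has_real_derivative v'' x) (at x)"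
    and eigen: "\<And>x. v'' x = (V x - \<omega>2) * v x"
  shows "((\<lambda>x. 2 * (v x * v' x) - 2 * (f' x / f x) * (v x)^2) has_real_derivative
      2 * (v' x - f' x / f x * v x)^2 + 2 * (V x - f'' x / f x - \<omega>2) * (v x)^2) (at x)"
proof -
  define g where "g x = f' x / f x" for x
  have g_deriv: "(g has_real_derivative f'' x / f x - (g x)^2) (at x)" for x
    unfolding g_def[abs_def] using f_pos[of x]
    by (intro log_deriv_has_real_derivative f_deriv f'_deriv) simp
  have "((\<lambda>x. 2 * (v x * v' x) - 2 * g x * (v x)^2) has_real_derivative 2 * (v' x * v' x + v x * v'' x)
      - 2 * ((f'' x / f x - (g x)^2) * (v x)^2 + g x * (2 * v x * v' x))) (at x)"
    by (rule derivative_eq_intros g_deriv v_deriv v'_deriv refl | simp)+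
  also have "2 * (v' x * v' x + v x * v'' x)
      - 2 * ((f'' x / f x - (g x)^2) * (v x)^2 + g x * (2 * v x * v' x))
      = 2 * (v' x - g x * v x)^2 + 2 * (V x - f'' x / f x - \<omega>2) * (v x)^2"
    by (simp add: eigen power2_eq_square algebra_simps)
  finally show ?thesis
    by (simp add: g_def)
qed

lemma ground_state_functional_tendsto_zero:
  fixes f f' v v' :: "real \<Rightarrow> real"
  assumes f_pos: "\<And>x. f x > 0"
    and log_deriv_bound: "\<And>x. \<bar>f' x\<bar> \<le> C * f x"
    and "((\<lambda>x. v x * v' x) \<longlongrightarrow> 0) F" "((\<lambda>x. (v x)^2) \<longlongrightarrow> 0) F"
  shows "((\<lambda>x. 2 * (v x * v' x) - 2 * (f' x / f x) * (v x)^2) \<longlongrightarrow> 0) F"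
proof (rule Lim_null_comparison)
  show "\<forall>\<^sub>F x in F. norm (2 * (v x * v' x) - 2 * (f' x / f x) * (v x)^2)
      \<le> 2 * \<bar>v x * v' x\<bar> + 2 * C * (v x)^2"
  proof (intro always_eventually allI)
    fix x
    have "\<bar>f' x / f x\<bar> \<le> C"
      using log_deriv_bound[of x] f_pos[of x] by (simp add: abs_div pos_divide_le_eq)
    then have "\<bar>f' x / f x\<bar> * (v x)^2 \<le> C * (v x)^2"
      by (rule mult_right_mono) simp
    moreover have "\<bar>2 * (v x * v' x) - 2 * (f' x / f x) * (v x)^2\<bar>
        \<le> 2 * \<bar>v x * v' x\<bar> + 2 * (\<bar>f' x / f x\<bar> * (v x)^2)"
      using abs_triangle_ineq4[of "2 * (v x * v' x)" "2 * (f' x / f x) * (v x)^2"]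
      by (simp add: abs_mult)
    ultimately show "norm (2 * (v x * v' x) - 2 * (f' x / f x) * (v x)^2)
        \<le> 2 * \<bar>v x * v' x\<bar> + 2 * C * (v x)^2"
      by simp
  qed
  show "((\<lambda>x. 2 * \<bar>v x * v' x\<bar> + 2 * C * (v x)^2) \<longlongrightarrow> 0) F"
    by (intro tendsto_add_zero tendsto_mult_right_zero tendsto_rabs_zero assms)
qed

text \<open>For \<open>\<omega>2 < 0\<close> the ground state functional \<open>2 v v' - 2 (f'/f) v\<^sup>2\<close> is nondecreasing and
  strictly increasing where \<open>v \<noteq> 0\<close>, yet it vanishes at both ends of the line.\<close>
lemma eigenvalue_nonneg_of_positive_supersolution:
  fixes f f' f'' V v v' v'' :: "real \<Rightarrow> real" and \<omega>2 C :: real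
  assumes f_pos: "\<And>x. f x > 0"
    and f_deriv: "\<And>x. (f has_real_derivative f' x) (at x)"
    and f'_deriv: "\<And>x. (f' has_real_derivative f'' x) (at x)"
    and supersolution: "\<And>x. f'' x \<le> V x * f x"
    and log_deriv_bound: "\<And>x. \<bar>f' x\<bar> \<le> C * f x"
    and v_deriv: "\<And>x. (v has_real_derivative v' x) (at x)"
    and v'_deriv: "\<And>x. (v' has_real_derivative v'' x) (at x)"
    and eigen: "\<And>x. v'' x = (V x - \<omega>2) * v x"
    and decay_top: "((\<lambda>x. v x * v' x) \<longlongrightarrow> 0) at_top" "((\<lambda>x. (v x)^2) \<longlongrightarrow> 0) at_top"
    and decay_bot: "((\<lambda>x. v x * v' x) \<longlongrightarrow> 0) at_bot" "((\<lambda>x. (v x)^2) \<longlongrightarrow> 0) at_bot"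
    and nonzero: "v x0 \<noteq> 0"
  shows "\<omega>2 \<ge> 0"
proof (rule ccontr)
  assume "\<not> \<omega>2 \<ge> 0"
  define J where "J x = 2 * (v x * v' x) - 2 * (f' x / f x) * (v x)^2" for x
  define D where "D x = 2 * (v' x - f' x / f x * v x)^2 + 2 * (V x - f'' x / f x - \<omega>2) * (v x)^2" for x
  have J_deriv: "(J has_real_derivative D x) (at x)" for x
    unfolding J_def[abs_def] D_def
    by (rule ground_state_functional_has_derivative[OF f_pos f_deriv f'_deriv v_deriv v'_deriv eigen])
  have excess_pos: "V x - f'' x / f x - \<omega>2 > 0" for x
  proof -
    have "f'' x / f x \<le> V x"
      using supersolution[of x] f_pos[of x] by (simp add: pos_divide_le_eq)
    with \<open>\<not> \<omega>2 \<ge> 0\<close> show ?thesis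
      by simp
  qed
  have D_nonneg: "D x \<ge> 0" for x
    using excess_pos[of x] unfolding D_def by (intro add_nonneg_nonneg mult_nonneg_nonneg) auto
  have "D x0 > 0"
    using excess_pos[of x0] nonzero unfolding D_def by (intro add_nonneg_pos mult_pos_pos) auto
  have "mono J"
  proof (rule monoI)
    fix x y :: real assume "x \<le> y"
    then show "J x \<le> J y"
    proof (rule DERIV_nonneg_imp_nondecreasing)
      fix t
      show "\<exists>d. (J has_real_derivative d) (at t) \<and> 0 \<le> d"
        using J_deriv[of t] D_nonneg[of t] by blast
    qed
  qed
  moreover have "(J \<longlongrightarrow> 0) at_top" "(J \<longlongrightarrow> 0) at_bot"
    unfolding J_def[abs_def]
    using ground_state_functional_tendsto_zero[OF f_pos log_deriv_bound decay_top]
      ground_state_functional_tendsto_zero[OF f_pos log_deriv_bound decay_bot] .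
  ultimately have "J = (\<lambda>_. 0)"
    by (intro ext mono_tendsto_zero_at_top_at_bot)
  then have "D x0 = 0"
    using DERIV_unique[OF J_deriv[of x0]] by simp
  with \<open>D x0 > 0\<close> show False by simp
qed

lemma kink_potential_eventually_nonneg:
  assumes "((\<lambda>r. (\<Phi> r)^2) \<longlongrightarrow> 1) F"
  shows "eventually (\<lambda>r. kink_potential a \<Phi> r \<ge> 0) F"
proof -
  have "eventually (\<lambda>r. (\<Phi> r)^2 > 1/3) F"
    using order_tendstoD(1)[OF assms, of "1/3"] by simp
  then show ?thesis
  proof eventually_elim
    case (elim r)
    have "0 \<le> a^2 / (r^2 + a^2)^2"
      by simp
    with elim show ?case
      unfolding kink_potential_def by argo
  qed
qed

locale wormhole_kink =
  fixes a :: real and \<Phi> \<Phi>' \<Phi>'' :: "real \<Rightarrow> real"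
  assumes a_pos: "a > 0"
    and has_deriv: "\<And>r. (\<Phi> has_real_derivative \<Phi>' r) (at r)"
    and has_deriv2: "\<And>r. (\<Phi>' has_real_derivative \<Phi>'' r) (at r)"
    and kink_ode: "\<And>r. \<Phi>'' r + 2 * r / (r^2 + a^2) * \<Phi>' r = - 2 * \<Phi> r * (1 - (\<Phi> r)^2)"
    and odd: "\<And>r. \<Phi> (- r) = - \<Phi> r"
    and tendsto_at_top: "(\<Phi> \<longlongrightarrow> 1) at_top"
    and tendsto_at_bot: "(\<Phi> \<longlongrightarrow> -1) at_bot"
begin

lemma throat_pos: "r^2 + a^2 > 0"
  using a_pos by (simp add: add_nonneg_pos)

lemma throat_nonzero: "r^2 + a^2 \<noteq> 0"
  using throat_pos[of r] by (metis order_less_irrefl)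

lemma value_at_zero: "\<Phi> 0 = 0"
  using odd[of 0] by simp

lemma deriv_even: "\<Phi>' (- r) = \<Phi>' r"
proof -
  have "((\<lambda>x. \<Phi> (- x)) has_real_derivative - \<Phi>' (- r)) (at r)"
    using DERIV_mirror[of \<Phi> "\<Phi>' (- r)" r] has_deriv[of "- r"] by simp
  moreover have "(\<lambda>x. \<Phi> (- x)) = (\<lambda>x. - \<Phi> x)"
    using odd by auto
  ultimately have "((\<lambda>x. - \<Phi> x) has_real_derivative - \<Phi>' (- r)) (at r)"
    by simp
  with DERIV_minus[OF has_deriv[of r]] show ?thesis
    using DERIV_unique by fastforce
qed

lemma second_deriv_eq: "\<Phi>'' r = - 2 * \<Phi> r * (1 - (\<Phi> r)^2) - 2 * r / (r^2 + a^2) * \<Phi>' r"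
  using kink_ode[of r] by (simp add: eq_diff_eq)

lemma continuous_on_kink: "continuous_on S \<Phi>"
  by (meson DERIV_isCont continuous_at_imp_continuous_on has_deriv)

lemma continuous_on_deriv: "continuous_on S \<Phi>'"
  by (meson DERIV_isCont continuous_at_imp_continuous_on has_deriv2)

definition energy :: "real \<Rightarrow> real" where
  "energy r = (\<Phi>' r)^2 / 2 + (\<Phi> r)^2 - (\<Phi> r)^4 / 2"

lemma energy_has_deriv: "(energy has_real_derivative - (2 * r / (r^2 + a^2)) * (\<Phi>' r)^2) (at r)"
proof -
  have "(energy has_real_derivative \<Phi>' r * \<Phi>'' r + 2 * \<Phi> r * \<Phi>' r - 2 * (\<Phi> r)^3 * \<Phi>' r) (at r)"
    unfolding energy_def[abs_def]
    by (rule derivative_eq_intros has_deriv has_deriv2 refl | simp add: algebra_simps)+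
  also have "\<Phi>' r * \<Phi>'' r + 2 * \<Phi> r * \<Phi>' r - 2 * (\<Phi> r)^3 * \<Phi>' r
      = - (2 * r / (r^2 + a^2)) * (\<Phi>' r)^2"
    unfolding second_deriv_eq by algebra
  finally show ?thesis .
qed

lemma energy_antimono: "energy s \<le> energy r" if "0 \<le> r" "r \<le> s"
proof (rule DERIV_nonpos_imp_nonincreasing[OF \<open>r \<le> s\<close>])
  fix t assume "r \<le> t" "t \<le> s"
  with that have "- (2 * t / (t^2 + a^2)) * (\<Phi>' t)^2 \<le> 0"
    using throat_pos[of t] by simp
  with energy_has_deriv[of t] show "\<exists>d. (energy has_real_derivative d) (at t) \<and> d \<le> 0"
    by blast
qed

lemma energy_ge_half: "energy r \<ge> 1/2" if "r \<ge> 0"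
proof -
  have "((\<lambda>s. (\<Phi> s)^2 - (\<Phi> s)^4 / 2) \<longlongrightarrow> 1^2 - 1^4 / 2) at_top"
    by (intro tendsto_intros tendsto_at_top) auto
  moreover have "eventually (\<lambda>s. (\<Phi> s)^2 - (\<Phi> s)^4 / 2 \<le> energy r) at_top"
    unfolding eventually_at_top_linorder
  proof (intro exI allI impI)
    fix s assume "s \<ge> r"
    with that have "energy s \<le> energy r"
      by (rule energy_antimono)
    then show "(\<Phi> s)^2 - (\<Phi> s)^4 / 2 \<le> energy r"
      unfolding energy_def using zero_le_power2[of "\<Phi>' s"] by linarith
  qed
  ultimately have "1^2 - 1^4 / 2 \<le> energy r"
    by (rule tendsto_upperbound) simp
  then show ?thesis
    by simp
qed

lemma deriv_sq_ge: "(1 - (\<Phi> r)^2)^2 \<le> (\<Phi>' r)^2" if "r \<ge> 0"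
proof -
  have "(1 - (\<Phi> r)^2)^2 = 1 - 2 * (\<Phi> r)^2 + (\<Phi> r)^4"
    by algebra
  with energy_ge_half[OF that] show ?thesis
    by (simp add: energy_def)
qed

text \<open>If \<open>\<Phi>'\<close> vanished at some \<open>r \<ge> 0\<close>, then \<open>\<Phi> r = \<plusminus>1\<close> by the energy bound, so \<open>\<Phi>\<close> would
  meet the constant solution \<open>\<plusminus>1\<close> with the same Cauchy data, contradicting \<open>\<Phi> 0 = 0\<close>.\<close>
lemma deriv_nonzero: "\<Phi>' r \<noteq> 0" if "r \<ge> 0"
proof
  assume "\<Phi>' r = 0"
  define s where "s = \<Phi> r"
  have "(1 - s^2)^2 \<le> 0"
    using deriv_sq_ge[OF that] \<open>\<Phi>' r = 0\<close> by (simp add: s_def)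
  then have "s^2 = 1" by simp
  have "(\<lambda>y. \<Phi> y - s) 0 = 0"
  proof (rule linear_second_order_ode_backward_unique[OF that])
    show "((\<lambda>y. \<Phi> y - s) has_real_derivative \<Phi>' y) (at y)" for y
      using DERIV_diff[OF has_deriv DERIV_const] by simp
    show "(\<Phi>' has_real_derivative (2 * \<Phi> y * (\<Phi> y + s)) * (\<Phi> y - s) + (- 2 * y / (y^2 + a^2)) * \<Phi>' y)
        (at y)" for y
    proof -
      have "\<Phi>'' y = (2 * \<Phi> y * (\<Phi> y + s)) * (\<Phi> y - s) + (- 2 * y / (y^2 + a^2)) * \<Phi>' y"
        unfolding second_deriv_eq using \<open>s^2 = 1\<close> by algebra
      then show ?thesis
        using has_deriv2[of y] by simp
    qed
    show "continuous_on {0..r} (\<lambda>y. 2 * \<Phi> y * (\<Phi> y + s))"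
      by (intro continuous_intros continuous_on_kink)
    show "continuous_on {0..r} (\<lambda>y. - 2 * y / (y^2 + a^2))"
      using a_pos by (intro continuous_intros) auto
  qed (simp_all add: s_def \<open>\<Phi>' r = 0\<close>)
  with value_at_zero \<open>s^2 = 1\<close> show False by simp
qed

lemma deriv_pos_on_nonneg: "\<Phi>' r > 0" if "r \<ge> 0"
proof -
  obtain N where N: "\<And>s. s \<ge> N \<Longrightarrow> \<Phi> s > 0"
    using order_tendstoD(1)[OF tendsto_at_top, of 0] unfolding eventually_at_top_linorder by auto
  define s where "s = max N 1"
  have "s > 0" "\<Phi> s > 0"
    using N[of s] by (simp_all add: s_def)
  then obtain t where "0 < t" "\<Phi> s - \<Phi> 0 = (s - 0) * \<Phi>' t"
    using MVT2[OF \<open>s > 0\<close>, of \<Phi> \<Phi>'] has_deriv by blast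
  with \<open>s > 0\<close> \<open>\<Phi> s > 0\<close> value_at_zero have "\<Phi>' t > 0"
    by (simp add: zero_less_mult_iff)
  show ?thesis
  proof (rule ccontr)
    assume "\<not> \<Phi>' r > 0"
    have "connected (\<Phi>' ` {0..})"
      by (intro connected_continuous_image continuous_on_deriv connected_Ici)
    then have "0 \<in> \<Phi>' ` {0..}"
    proof (rule connectedD_interval)
      show "\<Phi>' r \<in> \<Phi>' ` {0..}" "\<Phi>' t \<in> \<Phi>' ` {0..}"
        using that \<open>0 < t\<close> by simp_all
      show "\<Phi>' r \<le> 0" "0 \<le> \<Phi>' t"
        using \<open>\<not> \<Phi>' r > 0\<close> \<open>\<Phi>' t > 0\<close> by simp_all
    qed
    then obtain y where "y \<ge> 0" "\<Phi>' y = 0"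
      by auto
    with deriv_nonzero show False
      by blast
  qed
qed

lemma bounds_on_nonneg: "0 \<le> \<Phi> r \<and> \<Phi> r \<le> 1" if "r \<ge> 0"
proof -
  have mono: "\<Phi> x \<le> \<Phi> y" if "0 \<le> x" "x \<le> y" for x y
  proof (rule DERIV_nonneg_imp_nondecreasing[OF \<open>x \<le> y\<close>])
    fix t assume "x \<le> t" "t \<le> y"
    with that show "\<exists>d. (\<Phi> has_real_derivative d) (at t) \<and> 0 \<le> d"
      using has_deriv[of t] deriv_pos_on_nonneg[of t] by (intro exI[of _ "\<Phi>' t"]) simp
  qed
  have "eventually (\<lambda>y. \<Phi> r \<le> \<Phi> y) at_top"
    unfolding eventually_at_top_linorder using mono that by blast
  then have "\<Phi> r \<le> 1"
    by (rule tendsto_lowerbound[OF tendsto_at_top]) simp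
  moreover have "0 \<le> \<Phi> r"
    using mono[OF order.refl that] value_at_zero by simp
  ultimately show ?thesis by simp
qed

lemma deriv_pos: "\<Phi>' r > 0"
proof (cases "r \<ge> 0")
  case False
  then have "\<Phi>' (- r) > 0"
    by (intro deriv_pos_on_nonneg) simp
  then show ?thesis
    by (simp add: deriv_even)
qed (rule deriv_pos_on_nonneg)

lemma sq_le_one: "(\<Phi> r)^2 \<le> 1"
proof (cases "r \<ge> 0")
  case True
  then show ?thesis
    using bounds_on_nonneg[of r] by (simp add: power_le_one)
next
  case False
  then have "0 \<le> \<Phi> (- r)" "\<Phi> (- r) \<le> 1"
    using bounds_on_nonneg[of "- r"] by simp_all
  then show ?thesis
    using odd[of r] by (simp add: abs_square_le_1)
qed

lemma arg_mult_nonneg: "r * \<Phi> r \<ge> 0"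
proof (cases "r \<ge> 0")
  case True
  then show ?thesis
    using bounds_on_nonneg[of r] by simp
next
  case False
  then have "0 \<le> \<Phi> (- r)"
    using bounds_on_nonneg[of "- r"] by simp
  with False show ?thesis
    using odd[of r] by (simp add: mult_nonpos_nonpos)
qed

lemma one_minus_sq_le_deriv: "1 - (\<Phi> r)^2 \<le> \<Phi>' r"
proof -
  have "(1 - (\<Phi> r)^2)^2 \<le> (\<Phi>' r)^2"
  proof (cases "r \<ge> 0")
    case False
    then have "(1 - (\<Phi> (- r))^2)^2 \<le> (\<Phi>' (- r))^2"
      by (intro deriv_sq_ge) simp
    then show ?thesis
      by (simp add: odd deriv_even)
  qed (rule deriv_sq_ge)
  then show ?thesis
    using deriv_pos[of r] by (simp add: power2_le_iff_abs_le)
qed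

text \<open>\<open>supersol'\<close> and \<open>supersol''\<close> are the first two derivatives of \<open>supersol\<close>, simplified with
  the kink equation.\<close>

definition supersol :: "real \<Rightarrow> real" where
  "supersol r = (r^2 + a^2) * \<Phi>' r"

definition supersol' :: "real \<Rightarrow> real" where
  "supersol' r = - 2 * (r^2 + a^2) * \<Phi> r * (1 - (\<Phi> r)^2)"

definition supersol'' :: "real \<Rightarrow> real" where
  "supersol'' r = - 4 * r * \<Phi> r * (1 - (\<Phi> r)^2) - 2 * (r^2 + a^2) * \<Phi>' r * (1 - 3 * (\<Phi> r)^2)"

lemma supersol_pos: "supersol r > 0"
  using throat_pos[of r] deriv_pos[of r] by (simp add: supersol_def)

lemma supersol_has_deriv: "(supersol has_real_derivative supersol' r) (at r)"
proof -
  have "(supersol has_real_derivative 2 * r * \<Phi>' r + (r^2 + a^2) * \<Phi>'' r) (at r)"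
    unfolding supersol_def[abs_def]
    by (rule derivative_eq_intros has_deriv2 refl | simp)+
  also have "2 * r * \<Phi>' r + (r^2 + a^2) * \<Phi>'' r = supersol' r"
    unfolding second_deriv_eq supersol'_def using throat_nonzero[of r]
    by (simp add: field_simps)
  finally show ?thesis .
qed

lemma supersol'_has_deriv: "(supersol' has_real_derivative supersol'' r) (at r)"
proof -
  have "(supersol' has_real_derivative - 2 * (2 * r) * \<Phi> r * (1 - (\<Phi> r)^2)
      - 2 * (r^2 + a^2) * \<Phi>' r * (1 - (\<Phi> r)^2) + 2 * (r^2 + a^2) * \<Phi> r * (2 * \<Phi> r * \<Phi>' r)) (at r)"
    unfolding supersol'_def[abs_def]
    by (rule derivative_eq_intros has_deriv refl | simp add: algebra_simps)+
  also have "- 2 * (2 * r) * \<Phi> r * (1 - (\<Phi> r)^2) - 2 * (r^2 + a^2) * \<Phi>' r * (1 - (\<Phi> r)^2)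
      + 2 * (r^2 + a^2) * \<Phi> r * (2 * \<Phi> r * \<Phi>' r) = supersol'' r"
    unfolding supersol''_def by algebra
  finally show ?thesis .
qed

lemma supersol''_le: "supersol'' r \<le> kink_potential a \<Phi> r * supersol r"
proof -
  define R where "R = r^2 + a^2"
  have "R > 0"
    using throat_pos by (simp add: R_def)
  have "kink_potential a \<Phi> r * supersol r = a^2 / R^2 * (R * \<Phi>' r) - 2 * (1 - 3 * (\<Phi> r)^2) * (R * \<Phi>' r)"
    unfolding kink_potential_def supersol_def R_def by (simp only: left_diff_distrib)
  also have "\<dots> = a^2 * \<Phi>' r / R - 2 * (1 - 3 * (\<Phi> r)^2) * (R * \<Phi>' r)"
    using \<open>R > 0\<close> by (simp add: power2_eq_square)
  finally have "kink_potential a \<Phi> r * supersol r - supersol'' r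
      = a^2 * \<Phi>' r / R + 4 * (r * \<Phi> r) * (1 - (\<Phi> r)^2)"
    unfolding supersol''_def R_def by (simp add: algebra_simps)
  moreover have "0 \<le> a^2 * \<Phi>' r / R"
    using deriv_pos[of r] \<open>R > 0\<close> by simp
  moreover have "0 \<le> 4 * (r * \<Phi> r) * (1 - (\<Phi> r)^2)"
    using arg_mult_nonneg[of r] sq_le_one[of r] by simp
  ultimately show ?thesis
    by linarith
qed

lemma abs_supersol'_le: "\<bar>supersol' r\<bar> \<le> 2 * supersol r"
proof -
  have "\<bar>\<Phi> r\<bar> \<le> 1" "0 \<le> 1 - (\<Phi> r)^2"
    using sq_le_one[of r] by (simp_all add: abs_square_le_1)
  have "\<bar>supersol' r\<bar> = 2 * (r^2 + a^2) * (\<bar>\<Phi> r\<bar> * (1 - (\<Phi> r)^2))"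
    unfolding supersol'_def using \<open>0 \<le> 1 - (\<Phi> r)^2\<close> throat_pos[of r] by (simp add: abs_mult)
  also have "\<dots> \<le> 2 * (r^2 + a^2) * \<Phi>' r"
  proof (intro mult_left_mono)
    show "\<bar>\<Phi> r\<bar> * (1 - (\<Phi> r)^2) \<le> \<Phi>' r"
      using mult_left_le_one_le[OF \<open>0 \<le> 1 - (\<Phi> r)^2\<close> abs_ge_zero \<open>\<bar>\<Phi> r\<bar> \<le> 1\<close>]
        one_minus_sq_le_deriv[of r] by (simp add: mult.commute)
  qed (use throat_pos[of r] in simp)
  finally show ?thesis
    by (simp only: supersol_def mult.assoc)
qed

lemma eigenvalue_nonneg:
  fixes v v' v'' :: "real \<Rightarrow> real"
  assumes v_deriv: "\<And>x. (v has_real_derivative v' x) (at x)"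
    and v'_deriv: "\<And>x. (v' has_real_derivative v'' x) (at x)"
    and eigen: "\<And>x. v'' x = (kink_potential a \<Phi> x - \<omega>2) * v x"
    and L2: "integrable lborel (\<lambda>x. (v x)^2)"
    and "v x0 \<noteq> 0"
  shows "\<omega>2 \<ge> 0"
proof (rule ccontr)
  assume "\<not> \<omega>2 \<ge> 0"
  have convex: "eventually (\<lambda>x. v x * v'' x \<ge> 0) F" if "((\<lambda>r. (\<Phi> r)^2) \<longlongrightarrow> 1) F" for F
    using kink_potential_eventually_nonneg[where a = a, OF that]
  proof eventually_elim
    case (elim x)
    have "v x * v'' x = (kink_potential a \<Phi> x - \<omega>2) * (v x)^2"
      by (simp add: eigen power2_eq_square)
    with elim \<open>\<not> \<omega>2 \<ge> 0\<close> show ?case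
      by simp
  qed
  have "((\<lambda>r. (\<Phi> r)^2) \<longlongrightarrow> 1) at_top" "((\<lambda>r. (\<Phi> r)^2) \<longlongrightarrow> 1) at_bot"
    using tendsto_power[OF tendsto_at_top, of 2] tendsto_power[OF tendsto_at_bot, of 2] by simp_all
  note decay_top = square_integrable_tail_decay_at_top[OF v_deriv v'_deriv convex[OF this(1)] L2]
    and decay_bot = square_integrable_tail_decay_at_bot[OF v_deriv v'_deriv convex[OF this(2)] L2]
  have "\<omega>2 \<ge> 0"
    by (rule eigenvalue_nonneg_of_positive_supersolution[OF supersol_pos supersol_has_deriv
          supersol'_has_deriv supersol''_le abs_supersol'_le v_deriv v'_deriv eigen
          decay_top decay_bot \<open>v x0 \<noteq> 0\<close>])
  with \<open>\<not> \<omega>2 \<ge> 0\<close> show False ..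
qed

end

lemma smooth_has_real_derivative:
  assumes "smooth f"
  shows "((deriv ^^ n) f has_real_derivative (deriv ^^ Suc n) f x) (at x)"
  using assms by (simp add: smooth_def DERIV_deriv_iff_real_differentiable)

theorem mainTheorem1:
  fixes a :: real and \<Phi> :: "real \<Rightarrow> real"
  assumes a_pos: "a > 0"
    and Phi_smooth: "smooth \<Phi>"
    and Phi_odd: "\<forall>r. \<Phi> (- r) = - \<Phi> r"
    and Phi_ode: "\<forall>r. deriv (deriv \<Phi>) r + (2 * r / (r^2 + a^2)) * deriv \<Phi> r
                      = - 2 * \<Phi> r * (1 - (\<Phi> r)^2)"
    and Phi_top: "(\<Phi> \<longlongrightarrow> 1) at_top"
    and Phi_bot: "(\<Phi> \<longlongrightarrow> -1) at_bot"
  shows "\<forall>v \<omega>2. smooth v \<and> square_integrable v \<and> v \<noteq> (\<lambda>_. 0)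
            \<and> (\<forall>r. - deriv (deriv v) r + kink_potential a \<Phi> r * v r = \<omega>2 * v r)
            \<longrightarrow> \<omega>2 \<ge> 0"
proof (intro allI impI)
  fix v :: "real \<Rightarrow> real" and \<omega>2 :: real
  assume "smooth v \<and> square_integrable v \<and> v \<noteq> (\<lambda>_. 0)
    \<and> (\<forall>r. - deriv (deriv v) r + kink_potential a \<Phi> r * v r = \<omega>2 * v r)"
  then have "smooth v" and L2: "integrable lborel (\<lambda>x. (v x)^2)" and "v \<noteq> (\<lambda>_. 0)"
    and eigen: "\<And>r. deriv (deriv v) r = (kink_potential a \<Phi> r - \<omega>2) * v r"
    by (auto simp: square_integrable_def algebra_simps)
  obtain x0 where "v x0 \<noteq> 0"
    using \<open>v \<noteq> (\<lambda>_. 0)\<close> by auto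
  interpret wormhole_kink a \<Phi> "deriv \<Phi>" "deriv (deriv \<Phi>)"
    using a_pos Phi_odd Phi_ode Phi_top Phi_bot smooth_has_real_derivative[OF Phi_smooth, of 0]
      smooth_has_real_derivative[OF Phi_smooth, of 1]
    by unfold_locales simp_all
  show "\<omega>2 \<ge> 0"
    using smooth_has_real_derivative[OF \<open>smooth v\<close>, of 0] smooth_has_real_derivative[OF \<open>smooth v\<close>, of 1]
    by (intro eigenvalue_nonneg[OF _ _ eigen L2 \<open>v x0 \<noteq> 0\<close>]) simp_all
qed

end
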